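(* Let $S\subseteq(0,1)$ be an open set having $0$ as a limit point, and let $f:S\to(0,1)$ be differentiable with $f'(p)=\Omega(f(p)/p)$ as $p\to 0$. Then every (possibly randomized) Bernoulli factory for $f$ that is fast satisfies $\mathbb E[N]=\Omega(f(p)/p)$ as $p\to0$; that is, there exist $C',\delta'>0$ such that $\mathbb E[N]\ge C' f(p)/p$ for all $p\in S\cap(0,\delta')$.
   Context: For positive functions $f_1,f_2$, $f_1(x)=\Omega(f_2(x))$ as $x\to x_0$ means there are constants $C,\delta>0$ with $f_1(x)\ge Cf_2(x)$ for all $x$ in the domain with $|x-x_0|<\delta$. Let $X=(X_i)$ be i.i.d. Bernoulli with parameter $p\in S$ and $U=(U_i)$ i.i.d. uniform on $(0,1)$, independent of $X$. A (possibly randomized) Bernoulli factory for $f$ consists of measurable stopping functions $\tau_i(x_1,u_1;\dots;x_i,u_i)\in\{0,1\}$ and measurable output functions $\gamma_n(x_1,u_1;\dots;x_n,u_n)\in\{0,1\}$; $N=\min\{i:\tau_i(X_1,U_1;\dots;X_i,U_i)=1\}$ is assumed finite almost surely, and the output $Y=\gamma_N(X_1,U_1;\dots;X_N,U_N)$ satisfies $\Pr[Y=1]=f(p)$ for all $p\in S$. The factory is fast if for every $p\in S$ there exist $A>0$, $\beta<1$ with $\Pr[N>n]\le A\beta^n$ for all $n$. *)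

theory Defs
  imports "HOL-Probability.Probability"
begin

text \<open>A sample point is a sequence (X_1,U_1),(X_2,U_2),... stored 0-based:
  omega i = (X_(i+1), U_(i+1)).\<close>

definition coin_space :: "real \<Rightarrow> (nat \<Rightarrow> bool \<times> real) measure" where
  "coin_space p = (\<Pi>\<^sub>M i\<in>UNIV.
      (measure_pmf (bernoulli_pmf p) \<Otimes>\<^sub>M uniform_measure lborel {0<..<1}))"

definition coin_sets :: "(nat \<Rightarrow> bool \<times> real) measure" where
  "coin_sets = (\<Pi>\<^sub>M i\<in>UNIV. (count_space UNIV \<Otimes>\<^sub>M lborel))"

definition depends_on_prefix :: "nat \<Rightarrow> ((nat \<Rightarrow> bool \<times> real) \<Rightarrow> bool) \<Rightarrow> bool" where
  "depends_on_prefix i g \<longleftrightarrow> (\<forall>\<omega> \<omega>'. (\<forall>j<i. \<omega> j = \<omega>' j) \<longrightarrow> g \<omega> = g \<omega>')"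

definition stop_time :: "(nat \<Rightarrow> (nat \<Rightarrow> bool \<times> real) \<Rightarrow> bool) \<Rightarrow> (nat \<Rightarrow> bool \<times> real) \<Rightarrow> nat" where
  "stop_time \<tau> \<omega> = (LEAST i. 0 < i \<and> \<tau> i \<omega>)"

definition factory_output ::
  "(nat \<Rightarrow> (nat \<Rightarrow> bool \<times> real) \<Rightarrow> bool) \<Rightarrow> (nat \<Rightarrow> (nat \<Rightarrow> bool \<times> real) \<Rightarrow> bool)
    \<Rightarrow> (nat \<Rightarrow> bool \<times> real) \<Rightarrow> bool" where
  "factory_output \<tau> \<gamma> \<omega> = \<gamma> (stop_time \<tau> \<omega>) \<omega>"

definition bernoulli_factory ::
  "real set \<Rightarrow> (real \<Rightarrow> real) \<Rightarrow> (nat \<Rightarrow> (nat \<Rightarrow> bool \<times> real) \<Rightarrow> bool)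
    \<Rightarrow> (nat \<Rightarrow> (nat \<Rightarrow> bool \<times> real) \<Rightarrow> bool) \<Rightarrow> bool" where
  "bernoulli_factory S f \<tau> \<gamma> \<longleftrightarrow>
     (\<forall>i>0. \<tau> i \<in> measurable coin_sets (count_space UNIV) \<and> depends_on_prefix i (\<tau> i)) \<and>
     (\<forall>n>0. \<gamma> n \<in> measurable coin_sets (count_space UNIV) \<and> depends_on_prefix n (\<gamma> n)) \<and>
     (\<forall>p\<in>S. (AE \<omega> in coin_space p. \<exists>i>0. \<tau> i \<omega>) \<and>
             measure (coin_space p) {\<omega>\<in>space (coin_space p). factory_output \<tau> \<gamma> \<omega>} = f p)"

definition fast_factory :: "real set \<Rightarrow> (nat \<Rightarrow> (nat \<Rightarrow> bool \<times> real) \<Rightarrow> bool) \<Rightarrow> bool" where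
  "fast_factory S \<tau> \<longleftrightarrow>
     (\<forall>p\<in>S. \<exists>A>0. \<exists>\<beta><1. \<forall>n.
        measure (coin_space p) {\<omega>\<in>space (coin_space p). stop_time \<tau> \<omega> > n} \<le> A * \<beta> ^ n)"

end

theory Submission
  imports Defs
begin

text \<open>Realise the coin spaces for all p on one space: draw independent uniform pairs
  (V_i, U_i) and set X_i = [V_i < p]. The factory's outputs at p and at q can only differ
  if some V_j that is actually read lies between p and q. Whether V_j is read depends only on
  the earlier coordinates, so this has probability at most |p - q| times the probability of
  reading V_j; summing over j gives |f p - f q| \<le> E_p[N] |p - q|. Hence f'(p) \<le> E_p[N], and
  the hypothesis on f' yields the bound.\<close>

definition uniform01 :: "real measure" where
  "uniform01 = uniform_measure lborel {0<..<1}"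

lemma sets_uniform01 [simp, measurable_cong]: "sets uniform01 = sets lborel"
  by (simp add: uniform01_def)

lemma space_uniform01 [simp]: "space uniform01 = UNIV"
  by (simp add: uniform01_def)

lemma prob_space_uniform01: "prob_space uniform01"
  unfolding uniform01_def by (rule prob_space_uniform_measure) auto

lemma emeasure_uniform01:
  "A \<in> sets lborel \<Longrightarrow> emeasure uniform01 A = emeasure lborel ({0<..<1} \<inter> A)"
  unfolding uniform01_def by (subst emeasure_uniform_measure) (auto simp: divide_ennreal_def)

lemma emeasure_uniform01_atLeastLessThan:
  assumes "0 \<le> a" "a \<le> b" "b \<le> 1"
  shows "emeasure uniform01 {a..<b} = ennreal (b - a)"
proof -
  have "{0<..<1} \<inter> {a..<b} = (if a = 0 then {0<..<b} else {a..<b})"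
    using assms by auto
  then show ?thesis
    using assms by (simp add: emeasure_uniform01)
qed

lemma emeasure_uniform01_lessThan:
  assumes "0 \<le> p" "p \<le> 1"
  shows "emeasure uniform01 {..<p} = ennreal p"
proof -
  have "{0<..<1} \<inter> {..<p} = {0<..<p}"
    using assms by auto
  then show ?thesis
    using assms by (simp add: emeasure_uniform01)
qed

lemma distr_uniform01_less_eq_bernoulli:
  assumes "0 \<le> p" "p \<le> 1"
  shows "distr uniform01 (measure_pmf (bernoulli_pmf p)) (\<lambda>v. v < p) = measure_pmf (bernoulli_pmf p)"
proof (rule measure_eqI_finite[where A=UNIV])
  interpret prob_space uniform01
    by (rule prob_space_uniform01)
  have less_meas: "(\<lambda>v::real. v < p) \<in> measurable uniform01 (measure_pmf (bernoulli_pmf p))"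
    by simp
  fix b :: bool
  have "emeasure uniform01 ((\<lambda>v. v < p) -` {b}) = ennreal (if b then p else 1 - p)"
  proof (cases b)
    case True
    then have "(\<lambda>v. v < p) -` {b} = {..<p}"
      by auto
    then show ?thesis
      using True assms by (simp add: emeasure_uniform01_lessThan)
  next
    case False
    then have "(\<lambda>v. v < p) -` {b} = space uniform01 - {..<p}"
      by auto
    then show ?thesis
      using False assms emeasure_compl[of "{..<p}" uniform01] ennreal_minus[of p 1]
      by (simp add: emeasure_space_1 emeasure_uniform01_lessThan del: space_uniform01)
  qed
  then show "emeasure (distr uniform01 (measure_pmf (bernoulli_pmf p)) (\<lambda>v. v < p)) {b} =
      emeasure (measure_pmf (bernoulli_pmf p)) {b}"
    using assms less_meas by (simp add: emeasure_distr emeasure_pmf_single)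
qed auto


lemma distr_PiM_componentwise:
  fixes M :: "'i \<Rightarrow> 'a measure" and N :: "'i \<Rightarrow> 'b measure"
  assumes M: "\<And>i. prob_space (M i)" and N: "\<And>i. prob_space (N i)"
    and g: "\<And>i. g i \<in> measurable (M i) (N i)" and distr_g: "\<And>i. distr (M i) (N i) (g i) = N i"
  shows "distr (PiM UNIV M) (PiM UNIV N) (\<lambda>\<omega> i. g i (\<omega> i)) = PiM UNIV N"
    (is "distr ?K ?I ?t = ?I")
proof (rule measure_eqI_PiM_infinite[symmetric, OF refl])
  have g_space: "\<And>i x. x \<in> space (M i) \<Longrightarrow> g i x \<in> space (N i)"
    by (rule measurable_space[OF g])
  interpret prob_space ?I
    using N by (intro prob_space_PiM) auto
  show "finite_measure ?I"
    by unfold_locales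
  have t_meas: "?t \<in> measurable ?K ?I"
  proof (rule measurable_PiM_single')
    fix i
    have "(\<lambda>\<omega>. \<omega> i) \<in> measurable ?K (M i)"
      by (rule measurable_component_singleton) simp
    then show "(\<lambda>\<omega>. g i (\<omega> i)) \<in> measurable ?K (N i)"
      using g by (rule measurable_compose)
  qed (use g_space in \<open>auto simp: space_PiM PiE_iff\<close>)
  fix A J assume J: "finite J" "J \<subseteq> UNIV" and A: "\<And>i. i \<in> J \<Longrightarrow> A i \<in> sets (N i)"
  have "?I (prod_emb UNIV N J (Pi\<^sub>E J A)) = (\<Prod>j\<in>J. N j (A j))"
    using J A by (intro emeasure_PiM_emb N) auto
  also have "\<dots> = (\<Prod>j\<in>J. M j (g j -` A j \<inter> space (M j)))"
    using A g by (intro prod.cong refl) (metis distr_g emeasure_distr)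
  also have "\<dots> = ?K (prod_emb UNIV M J (\<Pi>\<^sub>E j\<in>J. g j -` A j \<inter> space (M j)))"
    using J A g by (intro emeasure_PiM_emb[symmetric] M) (auto intro: measurable_sets)
  also have "prod_emb UNIV M J (\<Pi>\<^sub>E j\<in>J. g j -` A j \<inter> space (M j)) =
      ?t -` prod_emb UNIV N J (Pi\<^sub>E J A) \<inter> space ?K"
    using J A g g_space by (auto simp: prod_emb_def space_PiM Pi_iff PiE_iff)
  also have "?K \<dots> = distr ?K ?I ?t (prod_emb UNIV N J (Pi\<^sub>E J A))"
    using J A t_meas by (intro emeasure_distr[symmetric] sets_PiM_I) (auto simp: Pi_iff)
  finally show "?I (prod_emb UNIV N J (Pi\<^sub>E J A)) = distr ?K ?I ?t (prod_emb UNIV N J (Pi\<^sub>E J A))" .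
qed simp

lemma emeasure_PiM_Collect_component:
  fixes M :: "'a measure" and j :: 'i
  defines "P \<equiv> PiM UNIV (\<lambda>_. M)"
  assumes M: "prob_space M"
    and R: "R \<in> measurable P (count_space UNIV)"
    and R_upd: "\<And>\<omega> x. R (fun_upd \<omega> j x) = R \<omega>"
    and A: "A \<in> sets M"
  shows "emeasure P {\<omega>\<in>space P. R \<omega> \<and> \<omega> j \<in> A} = emeasure P {\<omega>\<in>space P. R \<omega>} * emeasure M A"
proof -
  interpret M: prob_space M
    by fact
  define P' where "P' = PiM (UNIV - {j}) (\<lambda>_. M)"
  interpret P': prob_space P'
    unfolding P'_def using M by (intro prob_space_PiM)
  define h where "h = (\<lambda>(x, X). X(j := x) :: 'i \<Rightarrow> 'a)"
  have P_insert: "P = PiM (insert j (UNIV - {j})) (\<lambda>_. M)"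
    unfolding P_def by (simp add: insert_absorb)
  have distr_h: "distr (M \<Otimes>\<^sub>M P') P h = P"
    unfolding P_insert P'_def h_def by (rule distr_pair_PiM_eq_PiM) (use M in auto)
  have h_meas: "h \<in> measurable (M \<Otimes>\<^sub>M P') P"
    unfolding P_insert P'_def h_def case_prod_beta
    by (rule measurable_fun_upd[where J="UNIV - {j}"]) auto
  obtain x0 where x0: "x0 \<in> space M"
    using M.not_empty by blast
  define R' where "R' = {X\<in>space P'. R (X(j := x0))}"
  have "(\<lambda>X. X(j := x0)) \<in> measurable P' P"
    unfolding P_insert P'_def using x0 by (intro measurable_fun_upd[where J="UNIV - {j}"]) auto
  then have R'_sets: "R' \<in> sets P'"
    unfolding R'_def using R by measurable
  have R_upd_x0: "R (X(j := x)) = R (X(j := x0))" for X x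
    by (metis R_upd)
  have space_h: "h (x, X) \<in> space P" if "x \<in> space M" "X \<in> space P'" for x X
    using that unfolding P_def P'_def h_def by (auto simp: space_PiM PiE_iff extensional_def)
  have R_sets: "{\<omega>\<in>space P. R \<omega>} \<in> sets P"
    using R by measurable
  have RA_sets: "{\<omega>\<in>space P. R \<omega> \<and> \<omega> j \<in> A} \<in> sets P"
    using R[unfolded P_def] A unfolding P_def by measurable
  have "h -` {\<omega>\<in>space P. R \<omega> \<and> \<omega> j \<in> A} \<inter> space (M \<Otimes>\<^sub>M P') = A \<times> R'"
    using sets.sets_into_space[OF A] space_h
    by (auto simp: R'_def h_def space_pair_measure) (metis R_upd_x0)+
  then have "emeasure P {\<omega>\<in>space P. R \<omega> \<and> \<omega> j \<in> A} = emeasure (M \<Otimes>\<^sub>M P') (A \<times> R')"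
    using emeasure_distr[OF h_meas RA_sets] distr_h by simp
  also have "\<dots> = emeasure M A * emeasure P' R'"
    using A R'_sets by (rule P'.emeasure_pair_measure_Times)
  also have "h -` {\<omega>\<in>space P. R \<omega>} \<inter> space (M \<Otimes>\<^sub>M P') = space M \<times> R'"
    using space_h by (auto simp: R'_def h_def space_pair_measure) (metis R_upd_x0)+
  then have "emeasure P' R' = emeasure P {\<omega>\<in>space P. R \<omega>}"
    using emeasure_distr[OF h_meas R_sets] distr_h R'_sets
    by (simp add: P'.emeasure_pair_measure_Times M.emeasure_space_1)
  finally show ?thesis
    by (simp add: mult.commute)
qed

lemma coin_space_eq_PiM:
  "coin_space p = PiM UNIV (\<lambda>_. measure_pmf (bernoulli_pmf p) \<Otimes>\<^sub>M uniform01)"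
  unfolding coin_space_def uniform01_def ..

lemma sets_coin_space: "sets (coin_space p) = sets coin_sets"
  unfolding coin_space_def coin_sets_def
  by (intro sets_PiM_cong refl sets_pair_measure_cong) auto

lemma space_coin_space [simp]: "space (coin_space p) = UNIV"
  unfolding coin_space_def by (simp add: space_PiM space_pair_measure)

definition coupling_space :: "(nat \<Rightarrow> real \<times> real) measure" where
  "coupling_space = PiM UNIV (\<lambda>_. uniform01 \<Otimes>\<^sub>M uniform01)"

definition threshold :: "real \<Rightarrow> (nat \<Rightarrow> real \<times> real) \<Rightarrow> nat \<Rightarrow> bool \<times> real" where
  "threshold p \<omega> = (\<lambda>i. (fst (\<omega> i) < p, snd (\<omega> i)))"

lemma space_coupling_space [simp]: "space coupling_space = UNIV"
  unfolding coupling_space_def by (simp add: space_PiM space_pair_measure)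

lemma prob_space_coupling_space: "prob_space coupling_space"
  unfolding coupling_space_def by (intro prob_space_PiM prob_space_pair prob_space_uniform01)

lemma measurable_threshold [measurable]: "threshold p \<in> measurable coupling_space (coin_space p)"
  unfolding threshold_def coupling_space_def coin_space_eq_PiM
  by (rule measurable_PiM_single') (auto simp: space_PiM space_pair_measure)

lemma measurable_coupling_coordinate [measurable]:
  "(\<lambda>\<omega>. fst (\<omega> j)) \<in> borel_measurable coupling_space"
proof -
  have "(\<lambda>\<omega>. \<omega> j) \<in> measurable coupling_space (uniform01 \<Otimes>\<^sub>M uniform01)"
    unfolding coupling_space_def by (rule measurable_component_singleton) simp
  then have "(\<lambda>\<omega>. fst (\<omega> j)) \<in> measurable coupling_space uniform01"
    by (rule measurable_compose) simp
  then show ?thesis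
    using measurable_cong_sets[of coupling_space coupling_space uniform01 borel] by simp
qed

lemma distr_threshold_coupling_space:
  assumes "0 \<le> p" "p \<le> 1"
  shows "distr coupling_space (coin_space p) (threshold p) = coin_space p"
proof -
  let ?B = "measure_pmf (bernoulli_pmf p)"
  interpret prob_space uniform01
    by (rule prob_space_uniform01)
  have "distr (uniform01 \<Otimes>\<^sub>M uniform01) (?B \<Otimes>\<^sub>M uniform01) (\<lambda>(v, u). (v < p, id u)) =
      distr uniform01 ?B (\<lambda>v. v < p) \<Otimes>\<^sub>M distr uniform01 uniform01 id"
    by (rule pair_measure_distr[symmetric])
      (auto intro: prob_space_imp_sigma_finite prob_space_uniform01)
  also have "\<dots> = ?B \<Otimes>\<^sub>M uniform01"
    using distr_uniform01_less_eq_bernoulli[OF assms] distr_id[of uniform01] by (simp add: id_def)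
  finally have distr_pair: "distr (uniform01 \<Otimes>\<^sub>M uniform01) (?B \<Otimes>\<^sub>M uniform01) (\<lambda>(v, u). (v < p, u)) =
      ?B \<Otimes>\<^sub>M uniform01"
    by simp
  have "distr coupling_space (coin_space p) (threshold p) =
      distr coupling_space (coin_space p) (\<lambda>\<omega> i. (\<lambda>(v, u). (v < p, u)) (\<omega> i))"
    unfolding threshold_def by (simp add: case_prod_beta)
  also have "\<dots> = coin_space p"
    unfolding coupling_space_def coin_space_eq_PiM
    by (rule distr_PiM_componentwise)
      (auto intro: prob_space_pair prob_space_uniform01 prob_space_measure_pmf distr_pair)
  finally show ?thesis .
qed

lemma emeasure_coin_space_eq_coupling:
  assumes "0 \<le> p" "p \<le> 1" and P: "P \<in> measurable (coin_space p) (count_space UNIV)"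
  shows "emeasure (coin_space p) {x\<in>space (coin_space p). P x} =
    emeasure coupling_space {\<omega>\<in>space coupling_space. P (threshold p \<omega>)}"
proof -
  have "emeasure (coin_space p) {x\<in>space (coin_space p). P x} =
      emeasure (distr coupling_space (coin_space p) (threshold p)) {x\<in>space (coin_space p). P x}"
    using distr_threshold_coupling_space[OF assms(1,2)] by simp
  also have "\<dots> = emeasure coupling_space {\<omega>\<in>space coupling_space. P (threshold p \<omega>)}"
    using P by (subst emeasure_distr) (auto simp: vimage_def intro: measurable_sets[OF P, of "{True}", simplified])
  finally show ?thesis .
qed

lemma (in finite_measure) abs_measure_diff_le_measure_neq:
  assumes [measurable]: "Measurable.pred M P" "Measurable.pred M Q"
  shows "\<bar>measure M {x\<in>space M. P x} - measure M {x\<in>space M. Q x}\<bar> \<le> measure M {x\<in>space M. P x \<noteq> Q x}"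
proof -
  have "measure M {x\<in>space M. P x} \<le> measure M ({x\<in>space M. Q x} \<union> {x\<in>space M. P x \<noteq> Q x})"
    by (rule finite_measure_mono) auto
  also have "\<dots> \<le> measure M {x\<in>space M. Q x} + measure M {x\<in>space M. P x \<noteq> Q x}"
    by (rule measure_Un_le) auto
  finally have "measure M {x\<in>space M. P x} \<le> measure M {x\<in>space M. Q x} + measure M {x\<in>space M. P x \<noteq> Q x}" .
  moreover have "measure M {x\<in>space M. Q x} \<le> measure M ({x\<in>space M. P x} \<union> {x\<in>space M. P x \<noteq> Q x})"
    by (rule finite_measure_mono) auto
  moreover have "\<dots> \<le> measure M {x\<in>space M. P x} + measure M {x\<in>space M. P x \<noteq> Q x}"
    by (rule measure_Un_le) auto
  ultimately show ?thesis
    by linarith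
qed

lemma ennreal_of_nat_eq_suminf_indicator: "(of_nat n :: ennreal) = (\<Sum>j. indicator {..<n} j)"
proof -
  have "(\<Sum>j. indicator {..<n} j :: ennreal) = (\<Sum>j<n. indicator {..<n} j)"
    by (rule suminf_finite) auto
  then show ?thesis
    by simp
qed

locale factory_rules =
  fixes \<tau> \<gamma> :: "nat \<Rightarrow> (nat \<Rightarrow> bool \<times> real) \<Rightarrow> bool"
  assumes stop_rule: "\<forall>i>0. \<tau> i \<in> measurable coin_sets (count_space UNIV) \<and> depends_on_prefix i (\<tau> i)"
    and output_rule: "\<forall>n>0. \<gamma> n \<in> measurable coin_sets (count_space UNIV) \<and> depends_on_prefix n (\<gamma> n)"
begin

definition stops :: "nat \<Rightarrow> (nat \<Rightarrow> bool \<times> real) \<Rightarrow> bool" where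
  "stops i x \<longleftrightarrow> 0 < i \<and> \<tau> i x"

definition accepts :: "nat \<Rightarrow> (nat \<Rightarrow> bool \<times> real) \<Rightarrow> bool" where
  "accepts n x \<longleftrightarrow> 0 < n \<and> \<gamma> n x"

text \<open>Unlike factory_output, this is False on never-stopping paths, where factory_output
  evaluates the unconstrained \<gamma> 0.\<close>

definition result :: "(nat \<Rightarrow> bool \<times> real) \<Rightarrow> bool" where
  "result x \<longleftrightarrow> (\<exists>i. stops i x) \<and> accepts (stop_time \<tau> x) x"

text \<open>The pair x j = (X_(j+1), U_(j+1)) is read: no stop happens at steps 1, ..., j.\<close>

definition reads :: "nat \<Rightarrow> (nat \<Rightarrow> bool \<times> real) \<Rightarrow> bool" where
  "reads j x \<longleftrightarrow> (\<forall>i\<le>j. \<not> stops i x)"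

lemma stop_time_eq_Least: "stop_time \<tau> x = (LEAST i. stops i x)"
  unfolding stop_time_def stops_def ..

lemma measurable_stops [measurable]: "stops i \<in> measurable (coin_space p) (count_space UNIV)"
  using stop_rule measurable_cong_sets[OF sets_coin_space refl] unfolding stops_def
  by (cases "0 < i") auto

lemma measurable_accepts [measurable]: "accepts n \<in> measurable (coin_space p) (count_space UNIV)"
  using output_rule measurable_cong_sets[OF sets_coin_space refl] unfolding accepts_def
  by (cases "0 < n") auto

lemma measurable_stop_time [measurable]: "stop_time \<tau> \<in> measurable (coin_space p) (count_space UNIV)"
  unfolding stop_time_eq_Least[abs_def] by measurable

lemma measurable_result [measurable]: "result \<in> measurable (coin_space p) (count_space UNIV)"
  unfolding result_def[abs_def] by measurable

lemma measurable_reads [measurable]: "reads j \<in> measurable (coin_space p) (count_space UNIV)"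
  unfolding reads_def[abs_def] by measurable

lemma stops_prefix: "\<forall>k<i. x k = x' k \<Longrightarrow> stops i x = stops i x'"
  using stop_rule unfolding stops_def depends_on_prefix_def by blast

lemma accepts_prefix: "\<forall>k<n. x k = x' k \<Longrightarrow> accepts n x = accepts n x'"
  using output_rule unfolding accepts_def depends_on_prefix_def by blast

lemma reads_prefix: "\<forall>k<j. x k = x' k \<Longrightarrow> reads j x = reads j x'"
  unfolding reads_def using stops_prefix by (metis order.strict_trans2)

lemma less_stop_time_iff_reads:
  assumes "stops i x"
  shows "j < stop_time \<tau> x \<longleftrightarrow> reads j x"
  unfolding stop_time_eq_Least reads_def
  by (metis assms LeastI not_less_Least le_less_trans not_le Least_le)

lemma factory_output_eq_result: "\<exists>i>0. \<tau> i x \<Longrightarrow> factory_output \<tau> \<gamma> x = result x"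
  unfolding factory_output_def result_def accepts_def stop_time_eq_Least
  by (metis LeastI stops_def)

lemma result_differs_at_read_coordinate:
  assumes "result x \<noteq> result x'"
  shows "\<exists>j. reads j x \<and> x j \<noteq> x' j"
proof (rule ccontr)
  assume "\<not> ?thesis"
  then have agree: "reads j x \<Longrightarrow> x j = x' j" for j
    by blast
  show False
  proof (cases "\<exists>i. stops i x")
    case True
    then obtain i where i: "stops i x"
      by blast
    define n where "n = stop_time \<tau> x"
    have prefix: "\<forall>k<n. x k = x' k"
      using agree less_stop_time_iff_reads[OF i] unfolding n_def by blast
    have stops_n: "stops n x" and before_n: "\<And>k. k < n \<Longrightarrow> \<not> stops k x"
      unfolding n_def stop_time_eq_Least using i by (auto intro: LeastI dest: not_less_Least)
    have same_stops: "stops k x' = stops k x" if "k \<le> n" for k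
      using prefix that by (intro stops_prefix[symmetric]) auto
    have "stop_time \<tau> x' = n"
      unfolding stop_time_eq_Least
    proof (rule Least_equality)
      show "stops n x'"
        using stops_n same_stops by simp
      show "n \<le> k" if "stops k x'" for k
        using that before_n same_stops by (meson less_imp_le not_le)
    qed
    moreover have "accepts n x' = accepts n x"
      using prefix by (intro accepts_prefix[symmetric])
    ultimately have "result x' = result x"
      using i stops_n same_stops unfolding result_def n_def by auto
    then show False
      using assms by simp
  next
    case False
    then have "x = x'"
      using agree unfolding reads_def by auto
    then show False
      using assms by simp
  qed
qed

lemma nn_integral_stop_time_eq_suminf_reads:
  assumes stops_ae: "AE x in coin_space p. \<exists>i. stops i x"
  shows "(\<integral>\<^sup>+ x. of_nat (stop_time \<tau> x) \<partial>coin_space p) =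
    (\<Sum>j. emeasure (coin_space p) {x\<in>space (coin_space p). reads j x})"
proof -
  have "(\<integral>\<^sup>+ x. of_nat (stop_time \<tau> x) \<partial>coin_space p) =
      (\<integral>\<^sup>+ x. (\<Sum>j. indicator {x\<in>space (coin_space p). j < stop_time \<tau> x} x) \<partial>coin_space p)"
    by (intro nn_integral_cong) (simp add: ennreal_of_nat_eq_suminf_indicator indicator_def)
  also have "\<dots> = (\<Sum>j. \<integral>\<^sup>+ x. indicator {x\<in>space (coin_space p). j < stop_time \<tau> x} x \<partial>coin_space p)"
    by (rule nn_integral_suminf) measurable
  also have "\<dots> = (\<Sum>j. emeasure (coin_space p) {x\<in>space (coin_space p). j < stop_time \<tau> x})"
    by (intro suminf_cong nn_integral_indicator) measurable
  also have "\<dots> = (\<Sum>j. emeasure (coin_space p) {x\<in>space (coin_space p). reads j x})"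
  proof (intro suminf_cong emeasure_eq_AE)
    show "{x\<in>space (coin_space p). j < stop_time \<tau> x} \<in> sets (coin_space p)"
      and "{x\<in>space (coin_space p). reads j x} \<in> sets (coin_space p)" for j
      by measurable
  qed (use stops_ae less_stop_time_iff_reads in auto)
  finally show ?thesis .
qed

text \<open>Whether the j-th pair is read depends only on the pairs before it, so it is
  independent of the j-th uniform variable.\<close>

lemma emeasure_reads_threshold_Int_between:
  assumes "0 \<le> a" "a \<le> b" "b \<le> 1"
  shows "emeasure coupling_space {\<omega>\<in>space coupling_space. reads j (threshold p \<omega>) \<and> fst (\<omega> j) \<in> {a..<b}} =
    emeasure coupling_space {\<omega>\<in>space coupling_space. reads j (threshold p \<omega>)} * ennreal (b - a)"
proof -
  interpret U: prob_space uniform01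
    by (rule prob_space_uniform01)
  have "emeasure (uniform01 \<Otimes>\<^sub>M uniform01) ({a..<b} \<times> UNIV) = ennreal (b - a)"
    using assms U.emeasure_space_1
    by (subst U.emeasure_pair_measure_Times) (auto simp: emeasure_uniform01_atLeastLessThan)
  moreover have "reads j (threshold p (fun_upd \<omega> j x)) = reads j (threshold p \<omega>)" for \<omega> x
    by (rule reads_prefix) (auto simp: threshold_def)
  moreover have "(\<lambda>\<omega>. reads j (threshold p \<omega>)) \<in> measurable coupling_space (count_space UNIV)"
    by measurable
  ultimately show ?thesis
    using emeasure_PiM_Collect_component[of "uniform01 \<Otimes>\<^sub>M uniform01" "\<lambda>\<omega>. reads j (threshold p \<omega>)" j
        "{a..<b} \<times> UNIV"]
    by (simp add: coupling_space_def[symmetric] prob_space_pair prob_space_uniform01 mem_Times_iff)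
qed

lemma coupling_result_bound:
  assumes p: "0 \<le> p" "p \<le> 1" and q: "0 \<le> q" "q \<le> 1"
    and stops_ae: "AE x in coin_space p. \<exists>i. stops i x"
  shows "ennreal \<bar>measure coupling_space {\<omega>\<in>space coupling_space. result (threshold p \<omega>)} -
      measure coupling_space {\<omega>\<in>space coupling_space. result (threshold q \<omega>)}\<bar>
    \<le> (\<integral>\<^sup>+ x. of_nat (stop_time \<tau> x) \<partial>coin_space p) * ennreal \<bar>p - q\<bar>"
proof -
  interpret W: prob_space coupling_space
    by (rule prob_space_coupling_space)
  define a b where "a = min p q" and "b = max p q"
  define E where
    "E j = {\<omega>\<in>space coupling_space. reads j (threshold p \<omega>) \<and> fst (\<omega> j) \<in> {a..<b}}" for j
  have E_sets: "E j \<in> sets coupling_space" for j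
    unfolding E_def by measurable
  have "ennreal \<bar>measure coupling_space {\<omega>\<in>space coupling_space. result (threshold p \<omega>)} -
      measure coupling_space {\<omega>\<in>space coupling_space. result (threshold q \<omega>)}\<bar>
    \<le> emeasure coupling_space
        {\<omega>\<in>space coupling_space. result (threshold p \<omega>) \<noteq> result (threshold q \<omega>)}"
    unfolding W.emeasure_eq_measure by (intro ennreal_leI W.abs_measure_diff_le_measure_neq) measurable
  also have "\<dots> \<le> emeasure coupling_space (\<Union>j. E j)"
  proof (rule emeasure_mono)
    show "{\<omega>\<in>space coupling_space. result (threshold p \<omega>) \<noteq> result (threshold q \<omega>)} \<subseteq> (\<Union>j. E j)"
    proof
      fix \<omega> assume "\<omega> \<in> {\<omega>\<in>space coupling_space. result (threshold p \<omega>) \<noteq> result (threshold q \<omega>)}"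
      then obtain j where "reads j (threshold p \<omega>)" and "threshold p \<omega> j \<noteq> threshold q \<omega> j"
        using result_differs_at_read_coordinate by blast
      moreover from this(2) have "fst (\<omega> j) \<in> {a..<b}"
        unfolding threshold_def a_def b_def by auto
      ultimately show "\<omega> \<in> (\<Union>j. E j)"
        unfolding E_def by auto
    qed
  qed (use E_sets in auto)
  also have "\<dots> \<le> (\<Sum>j. emeasure coupling_space (E j))"
    by (rule emeasure_subadditive_countably) (use E_sets in auto)
  also have "\<dots> = (\<Sum>j. emeasure coupling_space {\<omega>\<in>space coupling_space. reads j (threshold p \<omega>)}) *
      ennreal (b - a)"
    unfolding E_def using p q
    by (subst emeasure_reads_threshold_Int_between) (auto simp: a_def b_def)
  also have "\<dots> = (\<integral>\<^sup>+ x. of_nat (stop_time \<tau> x) \<partial>coin_space p) * ennreal \<bar>p - q\<bar>"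
    using nn_integral_stop_time_eq_suminf_reads[OF stops_ae]
      emeasure_coin_space_eq_coupling[OF p measurable_reads]
    by (simp add: a_def b_def max_def min_def abs_if)
  finally show ?thesis .
qed

end

lemma bernoulli_factory_lipschitz:
  assumes factory: "bernoulli_factory S f \<tau> \<gamma>" and S: "S \<subseteq> {0..1}" and f_nonzero: "\<forall>r\<in>S. f r \<noteq> 0"
    and p: "p \<in> S" and q: "q \<in> S"
  shows "ennreal \<bar>f p - f q\<bar> \<le> (\<integral>\<^sup>+ x. of_nat (stop_time \<tau> x) \<partial>coin_space p) * ennreal \<bar>p - q\<bar>"
proof -
  interpret factory_rules \<tau> \<gamma>
    using factory unfolding bernoulli_factory_def factory_rules_def by blast
  have stops_ae: "AE x in coin_space r. \<exists>i. stops i x" if "r \<in> S" for r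
    using factory that unfolding bernoulli_factory_def stops_def by auto
  have f_eq: "f r = measure coupling_space {\<omega>\<in>space coupling_space. result (threshold r \<omega>)}"
    if r: "r \<in> S" for r
  proof -
    let ?accepting = "{x\<in>space (coin_space r). factory_output \<tau> \<gamma> x}"
    have f_r: "measure (coin_space r) ?accepting = f r"
      using factory r unfolding bernoulli_factory_def by blast
    text \<open>Since \<gamma> 0 is unconstrained, ?accepting need not be measurable a priori; the
      junk value 0 of measure on non-measurable sets is excluded by f r \<noteq> 0.\<close>
    then have "?accepting \<in> sets (coin_space r)"
      using f_nonzero r measure_notin_sets by metis
    then have "emeasure (coin_space r) ?accepting = emeasure (coin_space r) {x\<in>space (coin_space r). result x}"
    proof (intro emeasure_eq_AE)
      show "{x\<in>space (coin_space r). result x} \<in> sets (coin_space r)"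
        by measurable
    qed (use stops_ae[OF r] factory_output_eq_result in \<open>auto simp: stops_def\<close>)
    also have "\<dots> = emeasure coupling_space {\<omega>\<in>space coupling_space. result (threshold r \<omega>)}"
      using S r by (intro emeasure_coin_space_eq_coupling) auto
    finally show ?thesis
      using f_r unfolding measure_def by simp
  qed
  show ?thesis
    using coupling_result_bound[OF _ _ _ _ stops_ae[OF p]] S p q by (simp add: f_eq subset_iff)
qed

lemma has_real_derivative_le_local_Lipschitz:
  assumes deriv: "(f has_real_derivative D) (at p)"
    and lipschitz: "eventually (\<lambda>q. \<bar>f q - f p\<bar> \<le> L * \<bar>q - p\<bar>) (at p)"
  shows "D \<le> L"
proof (rule tendsto_upperbound)
  show "((\<lambda>q. (f q - f p) / (q - p)) \<longlongrightarrow> D) (at p)"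
    using deriv by (simp add: has_field_derivative_iff)
  have "eventually (\<lambda>q. q \<noteq> p) (at p)"
    by (simp add: eventually_at_filter)
  with lipschitz show "eventually (\<lambda>q. (f q - f p) / (q - p) \<le> L) (at p)"
  proof eventually_elim
    case (elim q)
    then have "\<bar>(f q - f p) / (q - p)\<bar> \<le> L"
      by (simp add: abs_divide divide_le_eq)
    then show ?case
      by linarith
  qed
qed simp

lemma deriv_le_expected_stop_time:
  assumes factory: "bernoulli_factory S f \<tau> \<gamma>" and S: "S \<subseteq> {0..1}" "open S"
    and f_nonzero: "\<forall>r\<in>S. f r \<noteq> 0"
    and p: "p \<in> S" and f_diff: "f differentiable (at p)"
  shows "ennreal (deriv f p) \<le> (\<integral>\<^sup>+ x. of_nat (stop_time \<tau> x) \<partial>coin_space p)"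
proof (cases "\<integral>\<^sup>+ x. of_nat (stop_time \<tau> x) \<partial>coin_space p" rule: ennreal_cases)
  case (real e)
  have "eventually (\<lambda>q. q \<in> S) (at p)"
    using S p eventually_at_topological by blast
  then have "eventually (\<lambda>q. \<bar>f q - f p\<bar> \<le> e * \<bar>q - p\<bar>) (at p)"
  proof eventually_elim
    case (elim q)
    have "ennreal \<bar>f p - f q\<bar> \<le> ennreal (e * \<bar>p - q\<bar>)"
      using bernoulli_factory_lipschitz[OF factory S(1) f_nonzero p elim] real
      by (simp add: ennreal_mult)
    then show ?case
      using real by (simp add: abs_minus_commute)
  qed
  then have "deriv f p \<le> e"
    using f_diff DERIV_deriv_iff_real_differentiable has_real_derivative_le_local_Lipschitz by blast
  then show ?thesis
    using real by (simp add: ennreal_leI)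
qed simp

theorem theorem4:
  fixes S :: "real set" and f :: "real \<Rightarrow> real"
    and \<tau> \<gamma> :: "nat \<Rightarrow> (nat \<Rightarrow> bool \<times> real) \<Rightarrow> bool"
  assumes S_sub: "S \<subseteq> {0<..<1}" and S_open: "open S" and S_lim: "0 islimpt S"
    and f_range: "f ` S \<subseteq> {0<..<1}"
    and f_diff: "\<forall>p\<in>S. f differentiable (at p)"
    and f_deriv: "\<exists>C>0. \<exists>\<delta>>0. \<forall>p\<in>S. p < \<delta> \<longrightarrow> deriv f p \<ge> C * (f p / p)"
    and factory: "bernoulli_factory S f \<tau> \<gamma>"
    and fast: "fast_factory S \<tau>"
  shows "\<exists>C'>0. \<exists>\<delta>'>0. \<forall>p\<in>S. p < \<delta>' \<longrightarrow>
           ennreal (C' * (f p / p)) \<le> (\<integral>\<^sup>+ \<omega>. of_nat (stop_time \<tau> \<omega>) \<partial>coin_space p)"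
proof -
  obtain C \<delta> where C: "C > 0" "\<delta> > 0" and deriv_lower: "\<forall>p\<in>S. p < \<delta> \<longrightarrow> C * (f p / p) \<le> deriv f p"
    using f_deriv by blast
  have "S \<subseteq> {0..1}" and f_nonzero: "\<forall>r\<in>S. f r \<noteq> 0"
    using S_sub f_range by auto
  then have "ennreal (C * (f p / p)) \<le> (\<integral>\<^sup>+ \<omega>. of_nat (stop_time \<tau> \<omega>) \<partial>coin_space p)"
    if "p \<in> S" "p < \<delta>" for p
    using deriv_lower deriv_le_expected_stop_time[OF factory _ S_open f_nonzero] f_diff that
    by (meson ennreal_leI order.trans)
  then show ?thesis
    using C by blast
qed

end
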